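(* Let $f_1,\dots,f_n$ be monotone linear functions that are not colinear. Then every locally optimal permutation for $f_1,\dots,f_n$ is counterclockwise.
   Context: A linear function is $f(x)=ax+b$; monotone means $a>0$; identical means $f(x)=x$. $\vec f=(b,1-a)^\top$ and $\theta(f)\in[0,2\pi)$ is its polar angle ($\bot$ if $\vec f=0$). For a permutation $\sigma$ of $[n]$, $f^\sigma=f_{\sigma(n)}\circ\cdots\circ f_{\sigma(1)}$; $g\le h$ for functions means pointwise. For integers $1\le\ell\le m<r\le n$, $\sigma_{\ell,m,r}$ is the permutation obtained from $\sigma$ by swapping the adjacent blocks $(\sigma(\ell),\dots,\sigma(m))$ and $(\sigma(m+1),\dots,\sigma(r))$: $\sigma_{\ell,m,r}(i)=\sigma(i)$ for $i<\ell$ or $i>r$, $\sigma_{\ell,m,r}(i)=\sigma(i-\ell+m+1)$ for $\ell\le i<\ell-m+r$, and $\sigma_{\ell,m,r}(i)=\sigma(i+m-r)$ for $\ell-m+r\le i\le r$. The neighborhood is $N(\sigma)=\{\sigma_{\ell,m,r}\mid 1\le\ell\le m<r\le n\}$, and $\sigma$ is locally optimal if $f^\sigma\le f^\mu$ for all $\mu\in N(\sigma)$. $\sigma$ is counterclockwise if, after discarding positions $i$ with $f_{\sigma(i)}$ identical, there is $k$ such that $\theta(f_{\sigma(k)})\le\cdots\le\theta(f_{\sigma(n)})\le\theta(f_{\sigma(1)})\le\cdots\le\theta(f_{\sigma(k-1)})$. $f_1,\dots,f_n$ are colinear if there is $\lambda$ with $\theta(f_i)-\lambda\in\{0,\pi\}+2\pi\mathbb{Z}$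 or $\theta(f_i)=\bot$ for all $i$. *)

theory Defs
  imports "HOL-Analysis.Analysis" "HOL-Combinatorics.Permutations"
begin

type_synonym linfun = "real \<times> real"

definition lf_apply :: "linfun \<Rightarrow> real \<Rightarrow> real" where
  "lf_apply f x = fst f * x + snd f"

definition monotone_lf :: "linfun \<Rightarrow> bool" where
  "monotone_lf f \<longleftrightarrow> fst f > 0"

definition identical_lf :: "linfun \<Rightarrow> bool" where
  "identical_lf f \<longleftrightarrow> (\<forall>x. lf_apply f x = x)"

definition lf_vec :: "linfun \<Rightarrow> complex" where
  "lf_vec f = Complex (snd f) (1 - fst f)"

text \<open>Polar angle in [0, 2 pi); None plays the role of bottom (zero vector).\<close>
definition theta :: "linfun \<Rightarrow> real option" where
  "theta f = (if lf_vec f = 0 then None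
              else Some (if Arg (lf_vec f) < 0 then Arg (lf_vec f) + 2 * pi else Arg (lf_vec f)))"

text \<open>f^sigma = f_{sigma(k)} o ... o f_{sigma(1)}, indices 1-based.\<close>
fun comp_perm :: "(nat \<Rightarrow> linfun) \<Rightarrow> (nat \<Rightarrow> nat) \<Rightarrow> nat \<Rightarrow> real \<Rightarrow> real" where
  "comp_perm F \<sigma> 0 = id"
| "comp_perm F \<sigma> (Suc k) = lf_apply (F (\<sigma> (Suc k))) \<circ> comp_perm F \<sigma> k"

definition block_swap :: "(nat \<Rightarrow> nat) \<Rightarrow> nat \<Rightarrow> nat \<Rightarrow> nat \<Rightarrow> nat \<Rightarrow> nat" where
  "block_swap \<sigma> l m r i =
     (if i < l \<or> r < i then \<sigma> i
      else if i < l + r - m then \<sigma> (i + m + 1 - l)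
      else \<sigma> (i + m - r))"

definition neighborhood :: "nat \<Rightarrow> (nat \<Rightarrow> nat) \<Rightarrow> (nat \<Rightarrow> nat) set" where
  "neighborhood n \<sigma> = {block_swap \<sigma> l m r | l m r. 1 \<le> l \<and> l \<le> m \<and> m < r \<and> r \<le> n}"

definition locally_optimal :: "(nat \<Rightarrow> linfun) \<Rightarrow> nat \<Rightarrow> (nat \<Rightarrow> nat) \<Rightarrow> bool" where
  "locally_optimal F n \<sigma> \<longleftrightarrow>
     (\<forall>\<mu>\<in>neighborhood n \<sigma>. \<forall>x. comp_perm F \<sigma> n x \<le> comp_perm F \<mu> n x)"

definition angle_seq :: "(nat \<Rightarrow> linfun) \<Rightarrow> nat \<Rightarrow> (nat \<Rightarrow> nat) \<Rightarrow> real list" where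
  "angle_seq F n \<sigma> =
     map (\<lambda>i. the (theta (F (\<sigma> i)))) (filter (\<lambda>i. \<not> identical_lf (F (\<sigma> i))) [1..<n+1])"

definition counterclockwise :: "(nat \<Rightarrow> linfun) \<Rightarrow> nat \<Rightarrow> (nat \<Rightarrow> nat) \<Rightarrow> bool" where
  "counterclockwise F n \<sigma> \<longleftrightarrow> (\<exists>k. sorted (rotate k (angle_seq F n \<sigma>)))"

definition colinear :: "(nat \<Rightarrow> linfun) \<Rightarrow> nat \<Rightarrow> bool" where
  "colinear F n \<longleftrightarrow> (\<exists>c::real. \<forall>i\<in>{1..n}.
      theta (F i) = None \<or> (\<exists>t. theta (F i) = Some t \<and> (\<exists>k::int. t - c = of_int k * pi)))"

end

theory Submission
  imports Defs
begin

text \<open>Identify a linear function \<open>f x = a x + b\<close> with its vector \<open>vec f = b + (1 - a) i \<in> \<complex>\<close>.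
  Then \<open>vec (g \<circ> f) = a\<^sub>g vec f + vec g\<close>, and \<open>f \<circ> g - g \<circ> f\<close> is the constant
  \<open>cross (vec f) (vec g)\<close>. So local optimality says that for any two adjacent blocks \<open>A\<close>, \<open>B\<close> of
  the sequence, \<open>vec B\<close> lies to the left of \<open>vec A\<close>. After a rotation making the first vector \<open>1\<close>,
  all prefix compositions lie in the closed upper half-plane. As long as a prefix is not on the
  non-positive real axis it separates the next two vectors from the cut of the argument at angle
  \<open>0\<close>, so their angles increase; once it is, every later vector is real, all of the same sign.
  Two consecutive opposite vectors would force all vectors onto one line, which non-colinearity
  excludes. Hence the angles, measured from the first vector, increase with at most one wrap-around.\<close>

section \<open>Cross product and argument\<close>

definition cross :: "complex \<Rightarrow> complex \<Rightarrow> real" where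
  "cross u v = Re u * Im v - Im u * Re v"

lemma cross_of_real_mult_left [simp]: "cross (of_real c * u) v = c * cross u v"
  and cross_of_real_mult_right [simp]: "cross u (of_real c * v) = c * cross u v"
  and cross_add_left [simp]: "cross (u + z) v = cross u v + cross z v"
  and cross_add_right [simp]: "cross u (v + z) = cross u v + cross u z"
  and cross_self [simp]: "cross u u = 0"
  and cross_0 [simp]: "cross 0 u = 0" "cross u 0 = 0"
  and cross_1 [simp]: "cross 1 u = Im u"
  by (simp_all add: cross_def algebra_simps)

lemma cross_commute: "cross v u = - cross u v"
  by (simp add: cross_def)

lemma cross_divide: "cross (u / c) (v / c) = cross u v / (norm c)\<^sup>2"
proof -
  have cross_cnj: "cross x y = Im (cnj x * y)" for x y
    by (simp add: cross_def)
  have "cnj (u / c) * (v / c) = cnj u * v / (cnj c * c)"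
    by (simp add: field_simps)
  also have "cnj c * c = of_real ((norm c)\<^sup>2)"
    using complex_norm_square[of c] by (simp add: mult.commute)
  finally show ?thesis
    unfolding cross_cnj by (simp only: Im_divide_of_real)
qed

lemma cross_eq_norm_sin: "cross u v = norm u * norm v * sin (Arg2pi v - Arg2pi u)"
  by (simp add: cross_def sin_diff algebra_simps flip: cos_Arg2pi sin_Arg2pi)

lemma inner_eq_norm_cos: "u \<bullet> v = norm u * norm v * cos (Arg2pi v - Arg2pi u)"
  by (simp add: inner_complex_def cos_diff algebra_simps flip: cos_Arg2pi sin_Arg2pi)

lemma cross_eq_0_imp_parallel:
  assumes "u \<noteq> 0" "cross u v = 0"
  shows "v = of_real ((u \<bullet> v) / (norm u)\<^sup>2) * u"
proof -
  have "(norm u)\<^sup>2 = Re u * Re u + Im u * Im u"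
    by (simp add: cmod_def power2_eq_square)
  moreover have "Re u * Re u + Im u * Im u \<noteq> 0"
    using assms(1) by (simp add: complex_eq_iff add_nonneg_eq_0_iff)
  ultimately show ?thesis
    using assms(2) by (simp add: complex_eq_iff cross_def inner_complex_def field_simps)
qed

lemma sin_nonneg_imp_range:
  assumes "- pi < t" "t < 2 * pi" "sin t \<ge> 0"
  shows "0 \<le> t \<and> t \<le> pi"
proof -
  have "\<not> t < 0"
    using sin_gt_zero[of "- t"] assms by auto
  moreover have "\<not> t > pi"
    using sin_lt_zero[of t] assms by auto
  ultimately show ?thesis by auto
qed

text \<open>As \<open>0 \<le> Arg2pi p < \<pi>\<close>, the directions to the left of \<open>p\<close> have angles in
  \<open>[Arg2pi p, Arg2pi p + \<pi>] \<subseteq> [0, 2\<pi>)\<close>, so a counterclockwise turn within them increases \<open>Arg2pi\<close>.\<close>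
lemma Arg2pi_le_if_cross_nonneg:
  assumes p: "p \<noteq> 0" "Arg2pi p < pi" and uv: "u \<noteq> 0" "v \<noteq> 0"
    and "cross p u \<ge> 0" "cross p v \<ge> 0" "cross u v \<ge> 0"
    and not_opposite: "\<not> (cross u v = 0 \<and> u \<bullet> v < 0)"
  shows "Arg2pi u \<le> Arg2pi v"
proof -
  have sin_nonneg: "sin (Arg2pi y - Arg2pi x) \<ge> 0" if "x \<noteq> 0" "y \<noteq> 0" "cross x y \<ge> 0" for x y
    using that by (auto simp: cross_eq_norm_sin zero_le_mult_iff mult_le_0_iff)
  have within_pi: "0 \<le> Arg2pi x - Arg2pi p \<and> Arg2pi x - Arg2pi p \<le> pi"
    if "x \<noteq> 0" "cross p x \<ge> 0" for x
    using sin_nonneg[OF p(1) that] p(2) Arg2pi_ge_0[of x] Arg2pi_lt_2pi[of x] Arg2pi_ge_0[of p]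
    by (intro sin_nonneg_imp_range) auto
  have "0 \<le> Arg2pi u - Arg2pi p" "Arg2pi u - Arg2pi p \<le> pi"
    "0 \<le> Arg2pi v - Arg2pi p" "Arg2pi v - Arg2pi p \<le> pi"
    using within_pi[of u] within_pi[of v] assms by auto
  moreover have "Arg2pi v - Arg2pi u \<noteq> - pi"
  proof
    assume "Arg2pi v - Arg2pi u = - pi"
    then have "cross u v = 0" "u \<bullet> v < 0"
      using uv by (simp_all add: cross_eq_norm_sin inner_eq_norm_cos)
    then show False using not_opposite by blast
  qed
  ultimately have "- pi < Arg2pi v - Arg2pi u" "Arg2pi v - Arg2pi u < 2 * pi"
    using pi_gt_zero by (linarith, linarith)
  then show ?thesis
    using sin_nonneg_imp_range[of "Arg2pi v - Arg2pi u"] sin_nonneg[OF uv] assms by linarith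
qed

lemma Arg2pi_times_of_real_diff:
  assumes "c \<noteq> 0" "r \<noteq> 0"
  shows "\<exists>k::int. Arg2pi (c * of_real r) - Arg2pi c = of_int k * pi"
  using Arg2pi_times[of c "of_real r"] assms
  by (cases "r < 0")
     (auto simp: Arg2pi_of_real intro: exI[of _ 0] exI[of _ 1] exI[of _ "-1"])

lemma sorted_rotate_if_shifted_mono:
  fixes xs :: "real list" and \<beta> :: "nat \<Rightarrow> real"
  assumes shift: "\<And>i. i < length xs \<Longrightarrow> xs ! i = t + \<beta> i \<or> xs ! i = t + \<beta> i - 2 * pi"
    and range: "\<And>i. i < length xs \<Longrightarrow> 0 \<le> xs ! i \<and> xs ! i < 2 * pi"
    and mono: "mono \<beta>"
    and \<beta>_range: "\<And>i. 0 \<le> \<beta> i \<and> \<beta> i \<le> 2 * pi"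
  shows "\<exists>k. sorted (rotate k xs)"
proof -
  define wraps where "wraps i \<longleftrightarrow> 2 * pi \<le> t + \<beta> i" for i
  have xs_eq: "xs ! i = (if wraps i then t + \<beta> i - 2 * pi else t + \<beta> i)" if "i < length xs" for i
    using shift range that unfolding wraps_def by (smt (verit))
  have wraps_mono: "wraps j" if "wraps i" "i \<le> j" for i j
    using monoD[OF mono] that unfolding wraps_def by force
  show ?thesis
  proof (cases "\<exists>i<length xs. wraps i")
    case False
    then have "sorted xs"
      unfolding sorted_iff_nth_mono using monoD[OF mono] xs_eq by (metis add_left_mono le_less_trans)
    then have "sorted (rotate 0 xs)"
      by simp
    then show ?thesis ..
  next
    case True
    define k where "k = (LEAST i. i < length xs \<and> wraps i)"
    have k: "k < length xs" "wraps k"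
      using LeastI_ex[OF True] unfolding k_def by auto
    have before_k: "\<not> wraps i" if "i < k" for i
      using not_less_Least[of i "\<lambda>i. i < length xs \<and> wraps i"] that k unfolding k_def by auto
    have "sorted (drop k xs)"
      unfolding sorted_iff_nth_mono
      using monoD[OF mono] xs_eq wraps_mono[OF k(2)] by (auto simp: add_left_mono)
    moreover have "sorted (take k xs)"
      unfolding sorted_iff_nth_mono
      using monoD[OF mono] xs_eq before_k k by (auto simp: add_left_mono)
    moreover have "x \<le> y" if x_in: "x \<in> set (drop k xs)" and y_in: "y \<in> set (take k xs)" for x y
    proof -
      obtain i where "i < length (drop k xs)" "drop k xs ! i = x"
        using x_in unfolding in_set_conv_nth by blast
      then have "x = xs ! (k + i)" "k + i < length xs"
        using k(1) by auto
      moreover obtain j where "y = xs ! j" "j < k"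
        using y_in by (auto simp: in_set_conv_nth)
      moreover have "wraps (k + i)" "\<not> wraps j"
        using wraps_mono[OF k(2), of "k + i"] before_k[of j] \<open>j < k\<close> by simp_all
      ultimately have "x = t + \<beta> (k + i) - 2 * pi" "y = t + \<beta> j"
        using xs_eq[of "k + i"] xs_eq[of j] k(1) by simp_all
      moreover have "\<beta> (k + i) \<le> 2 * pi" "0 \<le> \<beta> j"
        using \<beta>_range by simp_all
      ultimately show ?thesis by linarith
    qed
    ultimately have "sorted (rotate k xs)"
      using k by (simp add: rotate_drop_take sorted_append)
    then show ?thesis by blast
  qed
qed

section \<open>Vectors of blocks\<close>

text \<open>If \<open>f i\<close> has slope \<open>a i\<close> and vector \<open>w i\<close>, then \<open>block_vec a w l j\<close> is the vector of
  \<open>f (j - 1) \<circ> \<dots> \<circ> f l\<close>, because the vector of \<open>g \<circ> f\<close> is \<open>a\<^sub>g * vec f + vec g\<close>.\<close>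
fun block_vec :: "(nat \<Rightarrow> real) \<Rightarrow> (nat \<Rightarrow> complex) \<Rightarrow> nat \<Rightarrow> nat \<Rightarrow> complex" where
  "block_vec a w l 0 = 0"
| "block_vec a w l (Suc j) = (if j < l then 0 else of_real (a j) * block_vec a w l j + w j)"

lemma block_vec_same [simp]: "block_vec a w l l = 0"
  by (cases l) auto

lemma block_vec_Suc: "l \<le> j \<Longrightarrow> block_vec a w l (Suc j) = of_real (a j) * block_vec a w l j + w j"
  by simp

lemma block_vec_split:
  assumes "l \<le> k" "k \<le> j"
  shows "block_vec a w l j = of_real (\<Prod>i\<in>{k..<j}. a i) * block_vec a w l k + block_vec a w k j"
  using assms(2)
proof (induction j)
  case (Suc j)
  show ?case
  proof (cases "k = Suc j")
    case False
    then have "k \<le> j" using Suc.prems by simp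
    with assms(1) Suc.IH show ?thesis
      by (simp add: prod.atLeastLessThan_Suc algebra_simps)
  qed simp
qed simp

lemma block_vec_divide: "block_vec a (\<lambda>i. w i / c) l j = block_vec a w l j / c"
  by (induction j) (auto simp: add_divide_distrib)

locale block_cross_nonneg =
  fixes a :: "nat \<Rightarrow> real" and w :: "nat \<Rightarrow> complex" and m :: nat
  assumes nonzero: "i < m \<Longrightarrow> w i \<noteq> 0"
    and slope_pos: "i < m \<Longrightarrow> 0 < a i"
    and cross_nonneg:
      "l < k \<Longrightarrow> k < j \<Longrightarrow> j \<le> m \<Longrightarrow> 0 \<le> cross (block_vec a w l k) (block_vec a w k j)"
begin

lemma cross_Suc_nonneg: "Suc i < m \<Longrightarrow> 0 \<le> cross (w i) (w (Suc i))"
  using cross_nonneg[of i "Suc i" "Suc (Suc i)"] by simp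

lemma prod_slope_pos: "j \<le> m \<Longrightarrow> 0 < (\<Prod>i\<in>{k..<j}. a i)"
  by (rule prod_pos) (simp add: slope_pos)

lemma cross_right_eq_0_if_blocks:
  assumes "\<And>j. k < j \<Longrightarrow> j \<le> m \<Longrightarrow> cross u (block_vec a w k j) = 0" "k \<le> i" "i < m"
  shows "cross u (w i) = 0"
proof -
  have "cross u (w i) = cross u (block_vec a w k (Suc i)) - a i * cross u (block_vec a w k i)"
    using block_vec_Suc[OF assms(2), of a w] by simp
  moreover have "cross u (block_vec a w k i) = 0"
    using assms by (cases "k = i") auto
  moreover have "cross u (block_vec a w k (Suc i)) = 0"
    using assms(1)[of "Suc i"] assms(2,3) by (simp del: block_vec.simps)
  ultimately show ?thesis
    by (simp del: block_vec.simps)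
qed

lemma cross_left_eq_0_if_blocks:
  assumes "\<And>l. l < p \<Longrightarrow> cross (block_vec a w l p) u = 0" "l < p" "p \<le> m"
  shows "cross (w l) u = 0"
proof -
  define A where "A = (\<Prod>i\<in>{Suc l..<p}. a i)"
  have "0 < A"
    unfolding A_def using assms(3) by (rule prod_slope_pos)
  have "block_vec a w l p = of_real A * w l + block_vec a w (Suc l) p"
    using block_vec_split[of l "Suc l" p a w] assms by (simp add: A_def)
  moreover have "cross (block_vec a w (Suc l) p) u = 0"
    using assms by (cases "Suc l = p") auto
  ultimately have "A * cross (w l) u = 0"
    using assms(1)[OF assms(2)] by simp
  with \<open>0 < A\<close> show ?thesis
    by simp
qed

text \<open>A block next to two opposite vectors must lie to the left of both of them, hence on their
  line.\<close>
lemma cross_eq_0_if_opposite_Suc: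
  assumes p: "Suc p < m" and \<mu>: "\<mu> < 0" "w (Suc p) = of_real \<mu> * w p" and i: "i < m"
  shows "cross (w p) (w i) = 0"
proof -
  have after: "cross (w p) (block_vec a w (Suc (Suc p)) j) = 0"
    if "Suc (Suc p) < j" "j \<le> m" for j
  proof -
    define A where "A = (\<Prod>i\<in>{Suc (Suc p)..<j}. a i)"
    have "block_vec a w (Suc p) j = of_real (A * \<mu>) * w p + block_vec a w (Suc (Suc p)) j"
      using block_vec_split[of "Suc p" "Suc (Suc p)" j a w] that \<mu>(2) by (simp add: A_def)
    then have "0 \<le> cross (w p) (block_vec a w (Suc (Suc p)) j)"
      using cross_nonneg[of p "Suc p" j] that by (simp add: mult.assoc)
    moreover have "0 \<le> \<mu> * cross (w p) (block_vec a w (Suc (Suc p)) j)"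
      using cross_nonneg[of "Suc p" "Suc (Suc p)" j] that \<mu>(2) by simp
    ultimately show ?thesis
      using \<mu>(1) by (simp add: zero_le_mult_iff)
  qed
  have before: "cross (block_vec a w l p) (w p) = 0" if "l < p" for l
  proof -
    have "0 \<le> cross (block_vec a w l p) (w p)"
      using cross_nonneg[of l p "Suc p"] that p by simp
    moreover have "0 \<le> a p * \<mu> * cross (block_vec a w l p) (w p)"
      using cross_nonneg[of l "Suc p" "Suc (Suc p)"] that p \<mu>(2) by (simp add: mult_ac)
    moreover have "a p * \<mu> < 0"
      using slope_pos[of p] p \<mu>(1) by (simp add: mult_pos_neg)
    ultimately show ?thesis
      using mult_neg_pos[of "a p * \<mu>" "cross (block_vec a w l p) (w p)"] by linarith
  qed
  consider "i < p" | "i = p" | "i = Suc p" | "Suc (Suc p) \<le> i"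
    by linarith
  then show ?thesis
  proof cases
    case 1
    then show ?thesis
      using cross_left_eq_0_if_blocks[of p "w p" i] before p cross_commute[of "w i" "w p"] by simp
  next
    case 2
    then show ?thesis by simp
  next
    case 3
    then show ?thesis using \<mu>(2) by simp
  next
    case 4
    then show ?thesis
      using cross_right_eq_0_if_blocks[of "Suc (Suc p)" "w p" i] after i by simp
  qed
qed

end

locale normalized_block_cross = block_cross_nonneg +
  assumes first_one: "w 0 = 1"
    and not_all_real: "\<exists>i<m. Im (w i) \<noteq> 0"
begin

lemma not_opposite_Suc:
  assumes "Suc p < m"
  shows "\<not> (cross (w p) (w (Suc p)) = 0 \<and> w p \<bullet> w (Suc p) < 0)"
proof
  assume opposite: "cross (w p) (w (Suc p)) = 0 \<and> w p \<bullet> w (Suc p) < 0"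
  define \<mu> where "\<mu> = (w p \<bullet> w (Suc p)) / (norm (w p))\<^sup>2"
  have "w p \<noteq> 0"
    using nonzero assms by simp
  then have "w (Suc p) = of_real \<mu> * w p" "\<mu> < 0"
    using opposite cross_eq_0_imp_parallel[of "w p" "w (Suc p)"]
    by (simp_all add: \<mu>_def divide_neg_pos)
  then have parallel: "cross (w p) (w i) = 0" if "i < m" for i
    using cross_eq_0_if_opposite_Suc assms that by blast
  have "Im (w p) = 0"
    using parallel[of 0] first_one assms by (simp add: cross_def)
  then have "Re (w p) \<noteq> 0"
    using \<open>w p \<noteq> 0\<close> by (simp add: complex_eq_iff)
  then have "Im (w i) = 0" if "i < m" for i
    using parallel[OF that] \<open>Im (w p) = 0\<close> by (simp add: cross_def)
  then show False
    using not_all_real by blast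
qed

lemma Im_block_vec_nonneg:
  assumes "0 < j" "j \<le> m"
  shows "0 \<le> Im (block_vec a w 0 j)"
proof (cases "j = 1")
  case False
  have "block_vec a w 0 j = of_real (\<Prod>i\<in>{1..<j}. a i) + block_vec a w 1 j"
    using block_vec_split[of 0 1 j a w] assms first_one by (simp del: of_real_prod)
  then show ?thesis
    using cross_nonneg[of 0 1 j] assms False first_one by (simp del: of_real_prod)
qed (simp add: first_one)

lemma Arg2pi_Suc_le:
  assumes i: "Suc i < m"
    and upper: "block_vec a w 0 (Suc i) \<noteq> 0" "Arg2pi (block_vec a w 0 (Suc i)) < pi"
  shows "Arg2pi (w i) \<le> Arg2pi (w (Suc i))"
proof (rule Arg2pi_le_if_cross_nonneg[OF upper])
  show "w i \<noteq> 0" "w (Suc i) \<noteq> 0"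
    using nonzero i by simp_all
  show "0 \<le> cross (w i) (w (Suc i))"
    using cross_Suc_nonneg[OF i] .
  show "\<not> (cross (w i) (w (Suc i)) = 0 \<and> w i \<bullet> w (Suc i) < 0)"
    using not_opposite_Suc[OF i] .
  show "0 \<le> cross (block_vec a w 0 (Suc i)) (w (Suc i))"
    using cross_nonneg[of 0 "Suc i" "Suc (Suc i)"] i by simp
  show "0 \<le> cross (block_vec a w 0 (Suc i)) (w i)"
  proof (cases i)
    case (Suc i')
    then show ?thesis
      using cross_nonneg[of 0 i "Suc i"] slope_pos[of i] i by simp
  qed (simp add: first_one)
qed

text \<open>A prefix composition outside the half-plane \<open>0 \<le> Arg2pi < \<pi>\<close> is a non-positive real, so without
  the first vector \<open>1\<close> it is a negative real; every later block lies to its left and, by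
  \<open>Im_block_vec_nonneg\<close>, in the upper half-plane, hence on the real axis.\<close>
lemma Im_eq_0_after_prefix_leaves:
  assumes k: "0 < k" "k < m"
    and leaves: "\<not> (block_vec a w 0 k \<noteq> 0 \<and> Arg2pi (block_vec a w 0 k) < pi)"
    and i: "k \<le> i" "i < m"
  shows "Im (w i) = 0"
proof -
  have prefix: "Im (block_vec a w 0 k) = 0 \<and> Re (block_vec a w 0 k) \<le> 0"
  proof (cases "block_vec a w 0 k = 0")
    case False
    then have "Arg2pi (block_vec a w 0 k) = pi"
      using leaves Im_block_vec_nonneg[of k] k Arg2pi_le_pi[of "block_vec a w 0 k"] by simp
    then show ?thesis
      by (simp add: Arg2pi_eq_pi complex_is_Real_iff)
  qed simp
  then have "k \<noteq> 1"
    using first_one by auto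
  define A where "A = (\<Prod>i\<in>{1..<k}. a i)"
  have "0 < A"
    unfolding A_def using k by (simp add: prod_slope_pos)
  moreover have "block_vec a w 0 k = of_real A + block_vec a w 1 k"
    using block_vec_split[of 0 1 k a w] k first_one by (simp add: A_def del: of_real_prod)
  ultimately have negative: "Im (block_vec a w 1 k) = 0" "Re (block_vec a w 1 k) < 0"
    using prefix by auto
  have "Im (block_vec a w k j) = 0" if j: "k < j" "j \<le> m" for j
  proof -
    have "0 \<le> Re (block_vec a w 1 k) * Im (block_vec a w k j)"
      using cross_nonneg[of 1 k j] j \<open>k \<noteq> 1\<close> k negative(1) by (simp add: cross_def)
    then have "Im (block_vec a w k j) \<le> 0"
      using negative(2) by (simp add: zero_le_mult_iff)
    moreover have "Im (block_vec a w 1 j) = Im (block_vec a w k j)"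
      using block_vec_split[of 1 k j a w] j k \<open>k \<noteq> 1\<close> negative(1) by (simp del: of_real_prod)
    moreover have "0 \<le> Im (block_vec a w 1 j)"
      using cross_nonneg[of 0 1 j] j k \<open>k \<noteq> 1\<close> first_one by simp
    ultimately show ?thesis by simp
  qed
  then show ?thesis
    using cross_right_eq_0_if_blocks[of k 1 i] i by simp
qed

lemma Re_pos_iff_if_real:
  assumes real: "\<And>i. k \<le> i \<Longrightarrow> i < m \<Longrightarrow> Im (w i) = 0" and i: "k \<le> i" "i < m"
  shows "0 < Re (w i) \<longleftrightarrow> 0 < Re (w k)"
  using i
proof (induction i)
  case (Suc i)
  show ?case
  proof (cases "k = Suc i")
    case False
    then have "k \<le> i" "Suc i < m"
      using Suc.prems by simp_all
    have "Re (w j) \<noteq> 0" if "k \<le> j" "j < m" for j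
      using nonzero[of j] real[of j] that by (auto simp: complex_eq_iff)
    then have "Re (w i) * Re (w (Suc i)) \<noteq> 0"
      using \<open>k \<le> i\<close> \<open>Suc i < m\<close> by simp
    moreover have "0 \<le> Re (w i) * Re (w (Suc i))"
      using not_opposite_Suc[OF \<open>Suc i < m\<close>] real[of i] real[of "Suc i"] \<open>k \<le> i\<close> \<open>Suc i < m\<close>
      by (simp add: cross_def inner_complex_def)
    ultimately have "0 < Re (w i) * Re (w (Suc i))"
      by (simp add: order_less_le)
    then have "0 < Re (w i) \<longleftrightarrow> 0 < Re (w (Suc i))"
      by (auto simp: zero_less_mult_iff)
    then show ?thesis
      using Suc.IH \<open>k \<le> i\<close> \<open>Suc i < m\<close> by simp
  qed simp
qed simp

lemma Arg2pi_mono_if_real_tail: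
  assumes k: "0 < k" "k < m"
    and mono_before: "\<And>i. Suc i < k \<Longrightarrow> Arg2pi (w i) \<le> Arg2pi (w (Suc i))"
    and real: "\<And>i. k \<le> i \<Longrightarrow> i < m \<Longrightarrow> Im (w i) = 0"
  obtains m0 where "m0 \<le> m"
    and "\<And>i. Suc i < m0 \<Longrightarrow> Arg2pi (w i) \<le> Arg2pi (w (Suc i))"
    and "\<And>i. m0 \<le> i \<Longrightarrow> i < m \<Longrightarrow> Im (w i) = 0 \<and> 0 < Re (w i)"
proof (cases "0 < Re (w k)")
  case True
  show ?thesis
  proof (rule that[of k])
    show "Im (w i) = 0 \<and> 0 < Re (w i)" if "k \<le> i" "i < m" for i
      using real[OF that] Re_pos_iff_if_real[OF real that] True by simp
  qed (use k mono_before in auto)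
next
  case False
  then have negative: "Re (w i) < 0" if "k \<le> i" "i < m" for i
  proof -
    have "w i \<noteq> 0" "Re (w i) \<le> 0"
      using Re_pos_iff_if_real[OF real that] False nonzero[of i] that by auto
    then show ?thesis
      using real[OF that] by (simp add: complex_eq_iff order_less_le)
  qed
  then have at_pi: "Arg2pi (w i) = pi" if "k \<le> i" "i < m" for i
    using real[OF that] that by (simp add: Arg2pi_eq_pi complex_is_Real_iff)
  obtain j where j: "k = Suc j"
    using k(1) gr0_implies_Suc by blast
  have "0 \<le> - Im (w j) * Re (w k)"
    using cross_Suc_nonneg[of j] real[of k] k j by (simp add: cross_def)
  then have "Arg2pi (w j) \<le> pi"
    using negative[of k] k by (simp add: Arg2pi_le_pi mult_le_0_iff)
  show ?thesis
  proof (rule that[of m])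
    show "Arg2pi (w i) \<le> Arg2pi (w (Suc i))" if "Suc i < m" for i
      using mono_before[of i] at_pi[of i] at_pi[of "Suc i"] \<open>Arg2pi (w j) \<le> pi\<close> j that
      by (cases "Suc i < k"; cases "Suc i = k") simp_all
  qed auto
qed

text \<open>The angles increase while the prefix compositions stay in the half-plane
  \<open>0 \<le> Arg2pi < \<pi>\<close>; afterwards all vectors are real of one sign, at angle \<open>\<pi>\<close> (still increasing)
  or at angle \<open>0\<close> (the wrap-around).\<close>
lemma Arg2pi_mono_then_positive_real:
  obtains m0 where "m0 \<le> m"
    and "\<And>i. Suc i < m0 \<Longrightarrow> Arg2pi (w i) \<le> Arg2pi (w (Suc i))"
    and "\<And>i. m0 \<le> i \<Longrightarrow> i < m \<Longrightarrow> Im (w i) = 0 \<and> 0 < Re (w i)"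
proof -
  define upper where "upper k \<longleftrightarrow> block_vec a w 0 k \<noteq> 0 \<and> Arg2pi (block_vec a w 0 k) < pi" for k
  show ?thesis
  proof (cases "\<forall>k. 0 < k \<and> k < m \<longrightarrow> upper k")
    case True
    show ?thesis
    proof (rule that[of m])
      show "Arg2pi (w i) \<le> Arg2pi (w (Suc i))" if "Suc i < m" for i
        using True that unfolding upper_def by (intro Arg2pi_Suc_le) auto
    qed auto
  next
    case False
    define k where "k = (LEAST k. 0 < k \<and> k < m \<and> \<not> upper k)"
    have k: "0 < k" "k < m" "\<not> upper k"
      using LeastI_ex[of "\<lambda>k. 0 < k \<and> k < m \<and> \<not> upper k"] False unfolding k_def by auto
    show ?thesis
    proof (rule Arg2pi_mono_if_real_tail[OF k(1,2)])
      show "Arg2pi (w i) \<le> Arg2pi (w (Suc i))" if "Suc i < k" for i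
        using not_less_Least[of "Suc i" "\<lambda>k. 0 < k \<and> k < m \<and> \<not> upper k"] that k
        by (intro Arg2pi_Suc_le) (auto simp: k_def upper_def)
      show "Im (w i) = 0" if "k \<le> i" "i < m" for i
        using Im_eq_0_after_prefix_leaves[OF k(1,2)] k(3) that unfolding upper_def by blast
    qed (use that in blast)
  qed
qed

end

lemma sorted_rotate_Arg2pi_if_block_cross_nonneg:
  assumes "block_cross_nonneg a v m" and not_parallel: "\<exists>i<m. cross (v 0) (v i) \<noteq> 0"
  shows "\<exists>k. sorted (rotate k (map (\<lambda>i. Arg2pi (v i)) [0..<m]))"
proof -
  interpret v: block_cross_nonneg a v m by fact
  define c where "c = v 0"
  define w where "w = (\<lambda>i. v i / c)"
  have "c \<noteq> 0"
    using not_parallel v.nonzero[of 0] unfolding c_def by auto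
  then have v_eq: "v i = c * w i" for i
    by (simp add: w_def)
  interpret normalized_block_cross a w m
  proof
    show "w i \<noteq> 0" "0 < a i" if "i < m" for i
      using that \<open>c \<noteq> 0\<close> v.nonzero v.slope_pos by (simp_all add: w_def)
    show "0 \<le> cross (block_vec a w l k) (block_vec a w k j)" if "l < k" "k < j" "j \<le> m" for l k j
      using v.cross_nonneg[OF that] by (simp add: w_def block_vec_divide cross_divide)
    show "w 0 = 1"
      using \<open>c \<noteq> 0\<close> by (simp add: w_def c_def)
    have "Im (w i) = cross c (v i) / (norm c)\<^sup>2" for i
    proof -
      have "cross (c / c) (v i / c) = cross c (v i) / (norm c)\<^sup>2"
        by (rule cross_divide)
      then show ?thesis
        unfolding divide_self[OF \<open>c \<noteq> 0\<close>] cross_1 w_def .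
    qed
    then show "\<exists>i<m. Im (w i) \<noteq> 0"
      using not_parallel \<open>c \<noteq> 0\<close> by (auto simp: c_def)
  qed
  obtain m0 where m0: "m0 \<le> m"
    "\<And>i. Suc i < m0 \<Longrightarrow> Arg2pi (w i) \<le> Arg2pi (w (Suc i))"
    "\<And>i. m0 \<le> i \<Longrightarrow> i < m \<Longrightarrow> Im (w i) = 0 \<and> 0 < Re (w i)"
    using Arg2pi_mono_then_positive_real by blast
  define \<beta> where "\<beta> i = (if i < m0 then Arg2pi (w i) else 2 * pi)" for i
  have "mono \<beta>"
  proof (rule monoI[OF lift_Suc_mono_le])
    show "\<beta> i \<le> \<beta> (Suc i)" for i
      using m0(2)[of i] Arg2pi_lt_2pi[of "w i"] by (simp add: \<beta>_def)
  qed
  moreover have "0 \<le> \<beta> i \<and> \<beta> i \<le> 2 * pi" for i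
    using Arg2pi_ge_0[of "w i"] Arg2pi_lt_2pi[of "w i"] by (simp add: \<beta>_def)
  moreover have "Arg2pi (v i) = Arg2pi c + \<beta> i \<or> Arg2pi (v i) = Arg2pi c + \<beta> i - 2 * pi"
    if "i < m" for i
  proof -
    have "Arg2pi (w i) = 0" if "m0 \<le> i"
      using m0(3)[OF that \<open>i < m\<close>] by (simp add: Arg2pi_eq_0 complex_is_Real_iff)
    then show ?thesis
      using Arg2pi_times[OF \<open>c \<noteq> 0\<close> nonzero[OF \<open>i < m\<close>]] Arg2pi_lt_2pi[of c]
      by (auto simp: v_eq \<beta>_def)
  qed
  ultimately show ?thesis
    by (intro sorted_rotate_if_shifted_mono[where t = "Arg2pi c" and \<beta> = \<beta>])
      (auto simp: Arg2pi_ge_0 Arg2pi_lt_2pi)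
qed

section \<open>Compositions of linear functions\<close>

definition lf_comp :: "linfun \<Rightarrow> linfun \<Rightarrow> linfun" where
  "lf_comp g f = (fst g * fst f, fst g * snd f + snd g)"

fun lf_compose :: "linfun list \<Rightarrow> linfun" where
  "lf_compose [] = (1, 0)"
| "lf_compose (f # fs) = lf_comp (lf_compose fs) f"

lemma lf_apply_lf_comp: "lf_apply (lf_comp g f) x = lf_apply g (lf_apply f x)"
  by (simp add: lf_comp_def lf_apply_def algebra_simps)

lemma lf_vec_lf_comp: "lf_vec (lf_comp g f) = of_real (fst g) * lf_vec f + lf_vec g"
  by (simp add: lf_comp_def lf_vec_def complex_eq_iff algebra_simps)

lemma lf_comp_id [simp]: "lf_comp (1, 0) f = f" "lf_comp f (1, 0) = f"
  by (simp_all add: lf_comp_def)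

lemma lf_compose_append: "lf_compose (xs @ ys) = lf_comp (lf_compose ys) (lf_compose xs)"
  by (induction xs) (simp_all add: lf_comp_def algebra_simps)

lemma lf_compose_snoc: "lf_compose (xs @ [f]) = lf_comp f (lf_compose xs)"
  by (simp add: lf_compose_append)

lemma fst_lf_compose_pos: "(\<And>f. f \<in> set xs \<Longrightarrow> 0 < fst f) \<Longrightarrow> 0 < fst (lf_compose xs)"
  by (induction xs) (auto simp: lf_comp_def)

lemma comp_perm_eq_lf_compose: "comp_perm F \<sigma> k = lf_apply (lf_compose (map (F \<circ> \<sigma>) [1..<k+1]))"
proof (induction k)
  case (Suc k)
  show ?case
    by (rule ext) (simp add: Suc.IH lf_compose_snoc lf_apply_lf_comp)
qed (auto simp: lf_apply_def)

lemma identical_lf_iff: "identical_lf f \<longleftrightarrow> f = (1, 0)"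
proof
  assume "identical_lf f"
  then have "lf_apply f 0 = 0" "lf_apply f 1 = 1"
    unfolding identical_lf_def by auto
  then show "f = (1, 0)"
    by (simp add: lf_apply_def prod_eq_iff)
qed (simp add: identical_lf_def lf_apply_def)

lemma lf_vec_eq_0_iff: "lf_vec f = 0 \<longleftrightarrow> identical_lf f"
  by (auto simp: identical_lf_iff lf_vec_def complex_eq_iff prod_eq_iff)

lemma lf_compose_filter_identical: "lf_compose (filter (\<lambda>f. \<not> identical_lf f) xs) = lf_compose xs"
  by (induction xs) (auto simp: identical_lf_iff lf_comp_def)

lemma lf_vec_lf_compose_eq_block_vec:
  assumes "l \<le> j" "j \<le> length ys"
  shows "lf_vec (lf_compose (take (j - l) (drop l ys)))
    = block_vec (\<lambda>i. fst (ys ! i)) (\<lambda>i. lf_vec (ys ! i)) l j"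
  using assms
proof (induction j)
  case (Suc j)
  show ?case
  proof (cases "l = Suc j")
    case False
    then have "l \<le> j" "j < length ys"
      using Suc.prems by simp_all
    then have "take (Suc j - l) (drop l ys) = take (j - l) (drop l ys) @ [ys ! j]"
      by (simp add: Suc_diff_le take_Suc_conv_app_nth)
    then show ?thesis
      using Suc.IH \<open>l \<le> j\<close> \<open>j < length ys\<close>
      by (simp add: lf_compose_snoc lf_vec_lf_comp)
  qed (simp add: lf_vec_def complex_eq_iff)
qed (simp add: lf_vec_def complex_eq_iff)

lemma map_block_swap:
  assumes xs: "map (F \<circ> \<sigma>) [1..<n+1] = P @ A @ B @ S"
  defines "p \<equiv> length P" and "a \<equiv> length A" and "b \<equiv> length B"
  shows "map (F \<circ> block_swap \<sigma> (p + 1) (p + a) (p + a + b)) [1..<n+1] = P @ B @ A @ S"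
proof (rule nth_equalityI)
  have n: "n = p + a + b + length S"
    using arg_cong[OF xs, of length] by (simp add: p_def a_def b_def del: upt_Suc)
  then show "length (map (F \<circ> block_swap \<sigma> (p + 1) (p + a) (p + a + b)) [1..<n+1]) = length (P @ B @ A @ S)"
    by (simp add: p_def a_def b_def del: upt_Suc)
  have nth: "F (\<sigma> (Suc t)) = (P @ A @ B @ S) ! t" if "t < n" for t
    using arg_cong[OF xs, of "\<lambda>ys. ys ! t"] that by (simp del: upt_Suc)
  fix i
  assume "i < length (map (F \<circ> block_swap \<sigma> (p + 1) (p + a) (p + a + b)) [1..<n+1])"
  then have "i < n" by (simp del: upt_Suc)
  consider "i < p" | "p \<le> i" "i < p + b" | "p + b \<le> i" "i < p + a + b" | "p + a + b \<le> i"
    by linarith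
  then show "map (F \<circ> block_swap \<sigma> (p + 1) (p + a) (p + a + b)) [1..<n+1] ! i = (P @ B @ A @ S) ! i"
  proof cases
    case 1
    then show ?thesis
      using nth[OF \<open>i < n\<close>] \<open>i < n\<close> by (simp add: block_swap_def nth_append p_def del: upt_Suc)
  next
    case 2
    then have "(P @ A @ B @ S) ! (i + a) = B ! (i - p)" "(P @ B @ A @ S) ! i = B ! (i - p)"
      by (simp_all add: nth_append_right nth_append_left p_def a_def b_def)
    then show ?thesis
      using 2 nth[of "i + a"] n by (simp add: block_swap_def del: upt_Suc)
  next
    case 3
    then have "(P @ A @ B @ S) ! (i - b) = A ! (i - b - p)" "(P @ B @ A @ S) ! i = A ! (i - b - p)"
      by (simp_all add: nth_append_right nth_append_left p_def a_def b_def add.commute)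
    then show ?thesis
      using 3 nth[of "i - b"] \<open>i < n\<close> by (simp add: block_swap_def Suc_diff_le del: upt_Suc)
  next
    case 4
    then have "(P @ A @ B @ S) ! i = S ! (i - (p + a + b))" "(P @ B @ A @ S) ! i = S ! (i - (p + a + b))"
      by (simp_all add: nth_append_right p_def a_def b_def add.commute add.left_commute)
    then show ?thesis
      using 4 nth[OF \<open>i < n\<close>] \<open>i < n\<close> by (simp add: block_swap_def del: upt_Suc)
  qed
qed

section \<open>Local optimality\<close>

definition adjacent_blocks_ccw :: "linfun list \<Rightarrow> bool" where
  "adjacent_blocks_ccw xs \<longleftrightarrow> (\<forall>P A B S. xs = P @ A @ B @ S \<longrightarrow> A \<noteq> [] \<longrightarrow> B \<noteq> [] \<longrightarrow>
      0 \<le> cross (lf_vec (lf_compose A)) (lf_vec (lf_compose B)))"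

text \<open>\<open>f \<circ> g - g \<circ> f\<close> is the constant \<open>cross (lf_vec f) (lf_vec g)\<close>.\<close>
lemma cross_nonneg_if_swap_not_lower:
  assumes "0 < fst s"
    and "lf_apply s (lf_apply g (lf_apply f y)) \<le> lf_apply s (lf_apply f (lf_apply g y))"
  shows "0 \<le> cross (lf_vec f) (lf_vec g)"
proof -
  have "lf_apply g (lf_apply f y) \<le> lf_apply f (lf_apply g y)"
    using assms unfolding lf_apply_def by (simp add: mult_le_cancel_left_pos)
  then show ?thesis
    unfolding cross_def lf_vec_def lf_apply_def by (simp add: algebra_simps)
qed

lemma set_map_permutes:
  assumes "\<sigma> permutes {1..n}"
  shows "set (map (F \<circ> \<sigma>) [1..<n+1]) = F ` {1..n}"
proof -
  have "set (map (F \<circ> \<sigma>) [1..<n+1]) = F ` \<sigma> ` {1..n}"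
    by (auto simp del: upt_Suc)
  then show ?thesis
    using permutes_image[OF assms] by simp
qed

lemma adjacent_blocks_ccw_if_locally_optimal:
  assumes mono: "\<forall>i\<in>{1..n}. monotone_lf (F i)" and perm: "\<sigma> permutes {1..n}"
    and opt: "locally_optimal F n \<sigma>"
  shows "adjacent_blocks_ccw (map (F \<circ> \<sigma>) [1..<n+1])"
  unfolding adjacent_blocks_ccw_def
proof (intro allI impI)
  fix P A B S
  assume xs: "map (F \<circ> \<sigma>) [1..<n+1] = P @ A @ B @ S" and "A \<noteq> []" "B \<noteq> []"
  define \<mu> where "\<mu> = block_swap \<sigma> (length P + 1) (length P + length A) (length P + length A + length B)"
  have "n = length P + length A + length B + length S"
    using arg_cong[OF xs, of length] by (simp del: upt_Suc)
  then have "1 \<le> length P + 1 \<and> length P + 1 \<le> length P + length A \<and>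
      length P + length A < length P + length A + length B \<and> length P + length A + length B \<le> n"
    using \<open>A \<noteq> []\<close> \<open>B \<noteq> []\<close> by (simp add: Suc_le_eq)
  then have "\<mu> \<in> neighborhood n \<sigma>"
    unfolding neighborhood_def \<mu>_def by blast
  then have "comp_perm F \<sigma> n 0 \<le> comp_perm F \<mu> n 0"
    using opt unfolding locally_optimal_def by blast
  moreover have "map (F \<circ> \<mu>) [1..<n+1] = P @ B @ A @ S"
    unfolding \<mu>_def using map_block_swap[OF xs] by simp
  moreover have "0 < fst (lf_compose S)"
  proof (rule fst_lf_compose_pos)
    fix f assume "f \<in> set S"
    then have "f \<in> F ` {1..n}"
      using set_map_permutes[OF perm, of F] unfolding xs by auto
    then show "0 < fst f"
      using mono by (auto simp: monotone_lf_def)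
  qed
  ultimately show "0 \<le> cross (lf_vec (lf_compose A)) (lf_vec (lf_compose B))"
    using cross_nonneg_if_swap_not_lower xs
    by (simp add: comp_perm_eq_lf_compose lf_compose_append lf_apply_lf_comp)
qed

lemma filter_eq_append_split:
  "filter Q xs = ys @ zs \<Longrightarrow> \<exists>xs1 xs2. xs = xs1 @ xs2 \<and> filter Q xs1 = ys \<and> filter Q xs2 = zs"
proof (induction xs arbitrary: ys)
  case (Cons x xs)
  show ?case
  proof (cases "ys = [] \<or> \<not> Q x")
    case True
    show ?thesis
    proof (cases "ys = []")
      case False
      with True Cons obtain xs1 xs2 where "xs = xs1 @ xs2" "filter Q xs1 = ys" "filter Q xs2 = zs"
        by auto
      with True False show ?thesis
        by (intro exI[of _ "x # xs1"] exI[of _ xs2]) simp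
    qed (use Cons.prems in \<open>intro exI[of _ "[]"] exI[of _ "x # xs"], simp\<close>)
  next
    case False
    then obtain ys' where "ys = x # ys'" "filter Q xs = ys' @ zs"
      using Cons.prems by (cases ys) auto
    with Cons.IH obtain xs1 xs2 where "xs = xs1 @ xs2" "filter Q xs1 = ys'" "filter Q xs2 = zs"
      by blast
    with False \<open>ys = x # ys'\<close> show ?thesis
      by (intro exI[of _ "x # xs1"] exI[of _ xs2]) simp
  qed
qed simp

lemma adjacent_blocks_ccw_filter_identical:
  assumes "adjacent_blocks_ccw xs"
  shows "adjacent_blocks_ccw (filter (\<lambda>f. \<not> identical_lf f) xs)"
  unfolding adjacent_blocks_ccw_def
proof (intro allI impI)
  let ?Q = "\<lambda>f. \<not> identical_lf f"
  fix P A B S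
  assume split: "filter ?Q xs = P @ A @ B @ S" and "A \<noteq> []" "B \<noteq> []"
  obtain X1 X2 where "xs = X1 @ X2" "filter ?Q X2 = A @ B @ S"
    using filter_eq_append_split[OF split] by blast
  moreover obtain Y1 Y2 where "X2 = Y1 @ Y2" "filter ?Q Y1 = A" "filter ?Q Y2 = B @ S"
    using filter_eq_append_split[OF calculation(2)] by blast
  moreover obtain Z1 Z2 where "Y2 = Z1 @ Z2" "filter ?Q Z1 = B"
    using filter_eq_append_split[OF calculation(5)] by blast
  ultimately have "xs = X1 @ Y1 @ Z1 @ Z2" "Y1 \<noteq> []" "Z1 \<noteq> []"
    "lf_compose A = lf_compose Y1" "lf_compose B = lf_compose Z1"
    using \<open>A \<noteq> []\<close> \<open>B \<noteq> []\<close> lf_compose_filter_identical by auto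
  then show "0 \<le> cross (lf_vec (lf_compose A)) (lf_vec (lf_compose B))"
    using assms unfolding adjacent_blocks_ccw_def by (metis (no_types, lifting))
qed

lemma block_cross_nonneg_if_adjacent_blocks_ccw:
  assumes "adjacent_blocks_ccw ys" and ys: "\<And>f. f \<in> set ys \<Longrightarrow> 0 < fst f \<and> \<not> identical_lf f"
  shows "block_cross_nonneg (\<lambda>i. fst (ys ! i)) (\<lambda>i. lf_vec (ys ! i)) (length ys)"
proof
  show "lf_vec (ys ! i) \<noteq> 0" "0 < fst (ys ! i)" if "i < length ys" for i
    using ys[of "ys ! i"] that by (simp_all add: lf_vec_eq_0_iff)
  fix l k j
  assume lkj: "l < k" "k < j" "j \<le> length ys"
  define A B where "A = take (k - l) (drop l ys)" and "B = take (j - k) (drop k ys)"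
  have "drop l ys = A @ drop k ys" "drop k ys = B @ drop j ys"
    unfolding A_def B_def using lkj
    by (metis append_take_drop_id drop_drop le_add_diff_inverse2 less_imp_le)+
  then have "ys = take l ys @ A @ B @ drop j ys"
    by (metis append_take_drop_id)
  moreover have "A \<noteq> []" "B \<noteq> []"
    unfolding A_def B_def using lkj by auto
  ultimately have "0 \<le> cross (lf_vec (lf_compose A)) (lf_vec (lf_compose B))"
    using assms(1) unfolding adjacent_blocks_ccw_def by blast
  then show "0 \<le> cross (block_vec (\<lambda>i. fst (ys ! i)) (\<lambda>i. lf_vec (ys ! i)) l k)
      (block_vec (\<lambda>i. fst (ys ! i)) (\<lambda>i. lf_vec (ys ! i)) k j)"
    unfolding A_def B_def using lkj by (simp add: lf_vec_lf_compose_eq_block_vec)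
qed

lemma theta_eq_Arg2pi: "theta f = (if identical_lf f then None else Some (Arg2pi (lf_vec f)))"
proof -
  have "(if Arg z < 0 then Arg z + 2 * pi else Arg z) = Arg2pi z" if "z \<noteq> 0" for z
  proof (rule Arg2pi_unique[symmetric])
    show "of_real (norm z) * exp (\<i> * of_real (if Arg z < 0 then Arg z + 2 * pi else Arg z)) = z"
      using Arg_eq[OF that] by (simp add: algebra_simps exp_add)
  qed (use that Arg_bounded[of z] in auto)
  then show ?thesis
    by (simp add: theta_def lf_vec_eq_0_iff)
qed

lemma colinear_if_cross_eq_0:
  assumes "c \<noteq> 0" and parallel: "\<And>i. i \<in> {1..n} \<Longrightarrow> \<not> identical_lf (F i) \<Longrightarrow> cross c (lf_vec (F i)) = 0"
  shows "colinear F n"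
  unfolding colinear_def
proof (intro exI[of _ "Arg2pi c"] ballI)
  fix i assume "i \<in> {1..n}"
  show "theta (F i) = None \<or> (\<exists>t. theta (F i) = Some t \<and> (\<exists>k::int. t - Arg2pi c = of_int k * pi))"
  proof (cases "identical_lf (F i)")
    case False
    define r where "r = (c \<bullet> lf_vec (F i)) / (norm c)\<^sup>2"
    have "lf_vec (F i) = c * of_real r"
      using cross_eq_0_imp_parallel[OF \<open>c \<noteq> 0\<close> parallel[OF \<open>i \<in> {1..n}\<close> False]]
      by (simp add: r_def mult.commute)
    moreover have "r \<noteq> 0"
      using False calculation by (auto simp: lf_vec_eq_0_iff[symmetric])
    ultimately show ?thesis
      using Arg2pi_times_of_real_diff[OF \<open>c \<noteq> 0\<close>] False by (simp add: theta_eq_Arg2pi)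
  qed (simp add: theta_eq_Arg2pi)
qed

lemma angle_seq_eq_map_Arg2pi:
  "angle_seq F n \<sigma> = map (\<lambda>f. Arg2pi (lf_vec f)) (filter (\<lambda>f. \<not> identical_lf f) (map (F \<circ> \<sigma>) [1..<n+1]))"
  by (simp add: angle_seq_def filter_map comp_def theta_eq_Arg2pi del: upt_Suc)

lemma cross_ne_0_if_not_colinear:
  assumes "\<not> colinear F n" and set_ys: "set ys = {f \<in> F ` {1..n}. \<not> identical_lf f}"
  shows "\<exists>i<length ys. cross (lf_vec (ys ! 0)) (lf_vec (ys ! i)) \<noteq> 0"
proof (rule ccontr)
  assume all_parallel: "\<not> (\<exists>i<length ys. cross (lf_vec (ys ! 0)) (lf_vec (ys ! i)) \<noteq> 0)"
  define c where "c = (if ys = [] then 1 else lf_vec (ys ! 0))"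
  have "c \<noteq> 0"
    using set_ys nth_mem[of 0 ys] by (auto simp: c_def lf_vec_eq_0_iff)
  moreover have "cross c (lf_vec (F i)) = 0" if "i \<in> {1..n}" "\<not> identical_lf (F i)" for i
  proof -
    have "F i \<in> set ys"
      using set_ys that by blast
    then obtain j where "j < length ys" "ys ! j = F i"
      by (auto simp: in_set_conv_nth)
    then show ?thesis
      using all_parallel by (auto simp: c_def)
  qed
  ultimately have "colinear F n"
    by (rule colinear_if_cross_eq_0)
  then show False
    using assms(1) by blast
qed

theorem mainTheorem8:
  fixes F :: "nat \<Rightarrow> real \<times> real" and n :: nat and \<sigma> :: "nat \<Rightarrow> nat"
  assumes "\<forall>i\<in>{1..n}. monotone_lf (F i)"
    and "\<not> colinear F n"
    and "\<sigma> permutes {1..n}"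
    and "locally_optimal F n \<sigma>"
  shows "counterclockwise F n \<sigma>"
proof -
  define ys where "ys = filter (\<lambda>f. \<not> identical_lf f) (map (F \<circ> \<sigma>) [1..<n+1])"
  have set_ys: "set ys = {f \<in> F ` {1..n}. \<not> identical_lf f}"
    unfolding ys_def set_filter set_map_permutes[OF assms(3)] ..
  have "block_cross_nonneg (\<lambda>i. fst (ys ! i)) (\<lambda>i. lf_vec (ys ! i)) (length ys)"
    using adjacent_blocks_ccw_filter_identical[OF adjacent_blocks_ccw_if_locally_optimal[OF assms(1,3,4)]]
      set_ys assms(1)
    by (intro block_cross_nonneg_if_adjacent_blocks_ccw) (auto simp: ys_def monotone_lf_def)
  then obtain k where "sorted (rotate k (map (\<lambda>i. Arg2pi (lf_vec (ys ! i))) [0..<length ys]))"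
    using sorted_rotate_Arg2pi_if_block_cross_nonneg cross_ne_0_if_not_colinear[OF assms(2) set_ys]
    by blast
  moreover have "map (\<lambda>i. Arg2pi (lf_vec (ys ! i))) [0..<length ys] = map (\<lambda>f. Arg2pi (lf_vec f)) ys"
    by (rule nth_equalityI) simp_all
  ultimately show ?thesis
    unfolding counterclockwise_def angle_seq_eq_map_Arg2pi ys_def[symmetric] by auto
qed

end
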